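(* Each member of $\mathcal{G}_3$ is cycle-extendable.
   Context: A half biwheel is obtained from a path $P$ of even length (possibly a single vertex) with color classes $A,B$, whose ends $u,v$ lie in $A$, by adding a new vertex $h$ (the hub) adjacent to every vertex of $A$; $u,v$ are the corners (if $P$ is a single vertex the result is $K_2$ and $u=v$). $\mathcal{G}_3$ (hexagon half biwheels) consists of the graphs obtained from the disjoint union of a $6$-cycle $a_0a_1a_2a_3a_4a_5a_0$ and a half biwheel $H_1$ with hub $h_1$ and corners $u_1,v_1$ by adding the edges $h_1a_4$, $v_1a_1$, $a_3h_1$ and $a_0u_1$. A matching covered graph (connected, at least two vertices, every edge in a perfect matching) is cycle-extendable if for every even cycle $C$ the graph $G-V(C)$ has a perfect matching. *)

theory Defs
  imports Main
begin

definition simple_graph :: "'a set \<Rightarrow> 'a set set \<Rightarrow> bool" where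
  "simple_graph V E \<longleftrightarrow> finite V \<and> (\<forall>e\<in>E. \<exists>x y. x \<noteq> y \<and> x \<in> V \<and> y \<in> V \<and> e = {x, y})"

definition perfect_matching :: "'a set \<Rightarrow> 'a set set \<Rightarrow> 'a set set \<Rightarrow> bool" where
  "perfect_matching V E M \<longleftrightarrow> M \<subseteq> E \<and> (\<forall>v\<in>V. \<exists>!e. e \<in> M \<and> v \<in> e)"

definition has_perfect_matching :: "'a set \<Rightarrow> 'a set set \<Rightarrow> bool" where
  "has_perfect_matching V E \<longleftrightarrow> (\<exists>M. perfect_matching V E M)"

definition graph_connected :: "'a set \<Rightarrow> 'a set set \<Rightarrow> bool" where
  "graph_connected V E \<longleftrightarrow>
     (\<forall>x\<in>V. \<forall>y\<in>V. (\<lambda>a b. {a, b} \<in> E)\<^sup>*\<^sup>* x y)"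

definition matching_covered :: "'a set \<Rightarrow> 'a set set \<Rightarrow> bool" where
  "matching_covered V E \<longleftrightarrow> simple_graph V E \<and> graph_connected V E \<and> card V \<ge> 2 \<and>
     (\<forall>e\<in>E. \<exists>M. perfect_matching V E M \<and> e \<in> M)"

definition is_cycle :: "'a set \<Rightarrow> 'a set set \<Rightarrow> 'a list \<Rightarrow> bool" where
  "is_cycle V E cs \<longleftrightarrow> length cs \<ge> 3 \<and> distinct cs \<and> set cs \<subseteq> V \<and>
     (\<forall>i < length cs. {cs ! i, cs ! ((i + 1) mod length cs)} \<in> E)"

definition even_cycle :: "'a set \<Rightarrow> 'a set set \<Rightarrow> 'a list \<Rightarrow> bool" where
  "even_cycle V E cs \<longleftrightarrow> is_cycle V E cs \<and> even (length cs)"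

definition del_verts_E :: "'a set set \<Rightarrow> 'a set \<Rightarrow> 'a set set" where
  "del_verts_E E S = {e \<in> E. e \<inter> S = {}}"

definition cycle_extendable :: "'a set \<Rightarrow> 'a set set \<Rightarrow> bool" where
  "cycle_extendable V E \<longleftrightarrow> matching_covered V E \<and>
     (\<forall>cs. even_cycle V E cs \<longrightarrow> has_perfect_matching (V - set cs) (del_verts_E E (set cs)))"

text \<open>The path P has vertices
  PV 0, ..., PV (2k), colour class A = even indices, corners u1 = PV 0, v1 = PV (2k),
  hub HB, hexagon a_i = CV i (i < 6).\<close>

datatype g3v = CV nat | PV nat | HB

definition g3_V :: "nat \<Rightarrow> g3v set" where
  "g3_V k = {CV i | i. i < 6} \<union> {PV j | j. j \<le> 2 * k} \<union> {HB}"

definition g3_E :: "nat \<Rightarrow> g3v set set" where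
  "g3_E k =
     {{CV i, CV ((i + 1) mod 6)} | i. i < 6}
   \<union> {{PV j, PV (j + 1)} | j. j < 2 * k}
   \<union> {{HB, PV (2 * j)} | j. j \<le> k}
   \<union> {{HB, CV 4}, {PV (2 * k), CV 1}, {CV 3, HB}, {CV 0, PV 0}}"

definition in_G3 :: "'a set \<Rightarrow> 'a set set \<Rightarrow> bool" where
  "in_G3 V E \<longleftrightarrow> (\<exists>k f. bij_betw f (g3_V k) V \<and> E = (\<lambda>e. f ` e) ` g3_E k)"

end

theory Submission
  imports Defs
begin

text \<open>
  Colour the model properly except on the two edges \<open>HB\<close>--\<open>CV 4\<close>
  and \<open>PV (2k)\<close>--\<open>CV 1\<close>. A cycle crosses every vertex set an even number of times, so an even
  cycle uses both of these edges or neither, and likewise both or neither of \<open>CV 0\<close>--\<open>PV 0\<close> and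
  \<open>CV 3\<close>--\<open>HB\<close>. Degree counting then shows that the cycle meets the path in an interval
  \<open>[lo, hi]\<close> with even ends and then passes through the hub, or misses path and hub altogether;
  and, since the triangle \<open>HB CV 3 CV 4\<close> is odd, the hexagon vertices off the cycle are none, all,
  or one of the pairs \<open>{4,5}, {5,0}, {2,3}, {1,2}\<close>. The remaining path vertices are matched in
  consecutive pairs (together with \<open>HB\<close>--\<open>PV 0\<close> if the cycle misses the path) and the remaining
  hexagon vertices by hexagon edges.
\<close>

section \<open>Cycles given by vertex lists\<close>

text \<open>Successor and predecessor modulo \<open>n\<close>, written without \<open>mod\<close> so that their properties need
  only a case split.\<close>

definition cyc_succ :: "nat \<Rightarrow> nat \<Rightarrow> nat" where
  "cyc_succ n i = (if Suc i = n then 0 else Suc i)"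

definition cyc_pred :: "nat \<Rightarrow> nat \<Rightarrow> nat" where
  "cyc_pred n i = (if i = 0 then n - 1 else i - 1)"

lemma Suc_mod_eq_cyc_succ: "i < n \<Longrightarrow> Suc i mod n = cyc_succ n i"
  by (auto simp: cyc_succ_def)

lemma cyc_succ_less: "i < n \<Longrightarrow> cyc_succ n i < n"
  by (auto simp: cyc_succ_def)

lemma cyc_pred_less: "i < n \<Longrightarrow> cyc_pred n i < n"
  by (auto simp: cyc_pred_def)

lemma cyc_succ_pred: "i < n \<Longrightarrow> cyc_succ n (cyc_pred n i) = i"
  by (auto simp: cyc_succ_def cyc_pred_def)

lemma cyc_pred_succ: "i < n \<Longrightarrow> cyc_pred n (cyc_succ n i) = i"
  by (auto simp: cyc_succ_def cyc_pred_def)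

lemma cyc_succ_succ_neq: "i < n \<Longrightarrow> 3 \<le> n \<Longrightarrow> cyc_succ n (cyc_succ n i) \<noteq> i"
  by (auto simp: cyc_succ_def)

lemma cyc_succ_neq_pred: "i < n \<Longrightarrow> 3 \<le> n \<Longrightarrow> cyc_succ n i \<noteq> cyc_pred n i"
  by (auto simp: cyc_succ_def cyc_pred_def)

lemma bij_betw_cyc_succ: "bij_betw (cyc_succ n) {..<n} {..<n}"
  by (rule bij_betw_byWitness[where f' = "cyc_pred n"])
    (auto simp: cyc_succ_less cyc_pred_less cyc_succ_pred cyc_pred_succ)

definition cycle_edges :: "'a list \<Rightarrow> 'a set set" where
  "cycle_edges cs = {{cs ! i, cs ! cyc_succ (length cs) i} | i. i < length cs}"

definition cut_edges :: "'a set \<Rightarrow> 'a set set \<Rightarrow> 'a set set" where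
  "cut_edges X F = {e \<in> F. e \<inter> X \<noteq> {} \<and> e - X \<noteq> {}}"

lemma cycle_edges_subset: "is_cycle V E cs \<Longrightarrow> cycle_edges cs \<subseteq> E"
  unfolding is_cycle_def cycle_edges_def by (auto simp: Suc_mod_eq_cyc_succ)

lemma cycle_edge_in_set: "{v, z} \<in> cycle_edges cs \<Longrightarrow> v \<in> set cs"
  unfolding cycle_edges_def by (auto simp: doubleton_eq_iff cyc_succ_less)

lemma cycle_edge_index_inj:
  assumes "is_cycle V E cs" "i < length cs" "j < length cs"
    and "{cs ! i, cs ! cyc_succ (length cs) i} = {cs ! j, cs ! cyc_succ (length cs) j}"
  shows "i = j"
proof -
  let ?n = "length cs"
  have n3: "3 \<le> ?n" and d: "distinct cs" using assms(1) by (auto simp: is_cycle_def)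
  from assms(4) consider "cs ! i = cs ! j"
    | "cs ! i = cs ! cyc_succ ?n j" "cs ! cyc_succ ?n i = cs ! j"
    by (auto simp: doubleton_eq_iff)
  then show ?thesis
  proof cases
    case 1
    then show ?thesis using nth_eq_iff_index_eq[OF d] assms(2,3) by auto
  next
    case 2
    then have "i = cyc_succ ?n j" "cyc_succ ?n i = j"
      using nth_eq_iff_index_eq[OF d] assms(2,3) cyc_succ_less by auto
    then show ?thesis using cyc_succ_succ_neq[OF assms(3) n3] by simp
  qed
qed

lemma card_cycle_edges_indices:
  assumes "is_cycle V E cs"
  shows "card {e \<in> cycle_edges cs. P e}
    = card {i. i < length cs \<and> P {cs ! i, cs ! cyc_succ (length cs) i}}"
proof -
  let ?edge = "\<lambda>i. {cs ! i, cs ! cyc_succ (length cs) i}"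
  have "{e \<in> cycle_edges cs. P e} = ?edge ` {i. i < length cs \<and> P (?edge i)}"
    unfolding cycle_edges_def by auto
  moreover have "inj_on ?edge {i. i < length cs \<and> P (?edge i)}"
    using cycle_edge_index_inj[OF assms] by (auto intro: inj_onI)
  ultimately show ?thesis by (simp add: card_image)
qed

lemma card_cycle_edges: "is_cycle V E cs \<Longrightarrow> card (cycle_edges cs) = length cs"
  using card_cycle_edges_indices[where P = "\<lambda>_. True"] by simp

lemma cycle_degree_two:
  assumes "is_cycle V E cs" "v \<in> set cs"
  obtains x y where "x \<noteq> y" "{v, x} \<in> cycle_edges cs" "{v, y} \<in> cycle_edges cs"
    "\<And>z. {v, z} \<in> cycle_edges cs \<Longrightarrow> z = x \<or> z = y"
proof -
  let ?n = "length cs"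
  have n3: "3 \<le> ?n" and d: "distinct cs" using assms(1) by (auto simp: is_cycle_def)
  obtain i where i: "i < ?n" "cs ! i = v" using assms(2) by (auto simp: in_set_conv_nth)
  let ?x = "cs ! cyc_succ ?n i" and ?y = "cs ! cyc_pred ?n i"
  have "?x \<noteq> ?y"
    using nth_eq_iff_index_eq[OF d] cyc_succ_less[OF i(1)] cyc_pred_less[OF i(1)]
      cyc_succ_neq_pred[OF i(1) n3] by auto
  moreover have "{v, ?x} \<in> cycle_edges cs" unfolding cycle_edges_def using i by auto
  moreover have "{v, ?y} \<in> cycle_edges cs"
    unfolding cycle_edges_def using i cyc_pred_less[OF i(1)] cyc_succ_pred[OF i(1)]
    by (auto intro!: exI[of _ "cyc_pred ?n i"] simp: insert_commute)
  moreover have "z = ?x \<or> z = ?y" if "{v, z} \<in> cycle_edges cs" for z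
  proof -
    from that obtain j where j: "j < ?n" "{v, z} = {cs ! j, cs ! cyc_succ ?n j}"
      unfolding cycle_edges_def by blast
    then consider "v = cs ! j" "z = cs ! cyc_succ ?n j" | "v = cs ! cyc_succ ?n j" "z = cs ! j"
      by (auto simp: doubleton_eq_iff)
    then show ?thesis
    proof cases
      case 1
      then show ?thesis using nth_eq_iff_index_eq[OF d] i j(1) by auto
    next
      case 2
      then have "cyc_succ ?n j = i"
        using nth_eq_iff_index_eq[OF d] i j(1) cyc_succ_less[OF j(1)] by auto
      then show ?thesis using 2 cyc_pred_succ[OF j(1)] by auto
    qed
  qed
  ultimately show ?thesis using that by blast
qed

lemma cycle_leaves_set:
  assumes "is_cycle V E cs" "a \<in> set cs" "a \<in> X" "b \<in> set cs" "b \<notin> X"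
  obtains i where "i < length cs" "cs ! i \<in> X" "cs ! cyc_succ (length cs) i \<notin> X"
proof -
  let ?n = "length cs"
  obtain ia where ia: "ia < ?n" "cs ! ia = a" using assms(2) by (auto simp: in_set_conv_nth)
  obtain ib where ib: "ib < ?n" "cs ! ib = b" using assms(4) by (auto simp: in_set_conv_nth)
  have "\<exists>i < ?n. cs ! i \<in> X \<and> cs ! cyc_succ ?n i \<notin> X"
  proof (rule ccontr)
    assume "\<not> ?thesis"
    then have stay: "cs ! cyc_succ ?n i \<in> X" if "i < ?n" "cs ! i \<in> X" for i
      using that by blast
    have "cs ! ((ia + m) mod ?n) \<in> X" for m
    proof (induction m)
      case 0
      then show ?case using ia assms(3) by simp
    next
      case (Suc m)
      have lt: "(ia + m) mod ?n < ?n" by (rule mod_less_divisor) (use ia in auto)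
      have "(ia + Suc m) mod ?n = cyc_succ ?n ((ia + m) mod ?n)"
        by (simp add: mod_Suc_eq Suc_mod_eq_cyc_succ[OF lt, symmetric])
      then show ?case using stay[OF lt Suc.IH] by simp
    qed
    from this[of "ib + ?n - ia"] show False using ia ib assms(5) by simp
  qed
  then show ?thesis using that by blast
qed

lemma cycle_crosses_twice:
  assumes "is_cycle V E cs" "a \<in> set cs" "a \<in> X" "b \<in> set cs" "b \<notin> X"
  obtains u1 w1 u2 w2 where "{u1, w1} \<in> cycle_edges cs" "{u2, w2} \<in> cycle_edges cs"
    "u1 \<in> X" "u2 \<in> X" "w1 \<notin> X" "w2 \<notin> X" "{u1, w1} \<noteq> {u2, w2}"
proof -
  let ?n = "length cs"
  obtain i where i: "i < ?n" "cs ! i \<in> X" "cs ! cyc_succ ?n i \<notin> X"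
    using cycle_leaves_set[OF assms] by blast
  obtain j where j: "j < ?n" "cs ! j \<notin> X" "cs ! cyc_succ ?n j \<in> X"
    using cycle_leaves_set[OF assms(1,4) _ assms(2), of "- X"] assms(3,5) by auto
  have "{cs ! i, cs ! cyc_succ ?n i} \<noteq> {cs ! j, cs ! cyc_succ ?n j}"
    using cycle_edge_index_inj[OF assms(1) i(1) j(1)] i j by auto
  moreover have "{cs ! i, cs ! cyc_succ ?n i} \<in> cycle_edges cs"
    "{cs ! cyc_succ ?n j, cs ! j} \<in> cycle_edges cs"
    using i(1) j(1) unfolding cycle_edges_def by (auto simp: insert_commute)
  ultimately show ?thesis using that i j by blast
qed

lemma even_card_colour_changes:
  fixes c :: "'a \<Rightarrow> bool"
  shows "even (card {i. i < length cs \<and> c (cs ! i) \<noteq> c (cs ! cyc_succ (length cs) i)})"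
proof -
  let ?n = "length cs"
  define g :: "nat \<Rightarrow> int" where "g i = of_bool (c (cs ! i))" for i
  \<comment> \<open>For 0/1 values, \<open>[g i \<noteq> g j] = g i + g j - 2 g i g j\<close>, and rotating the cycle preserves \<open>\<Sum> g\<close>.\<close>
  have shift: "(\<Sum>i<?n. g (cyc_succ ?n i)) = (\<Sum>i<?n. g i)"
    using sum.reindex_bij_betw[OF bij_betw_cyc_succ, of g] by simp
  have "int (card {i. i < ?n \<and> c (cs ! i) \<noteq> c (cs ! cyc_succ ?n i)})
      = (\<Sum>i<?n. of_bool (c (cs ! i) \<noteq> c (cs ! cyc_succ ?n i)))"
    by (simp add: sum.If_cases lessThan_def Collect_conj_eq[symmetric] Int_def)
  also have "\<dots> = (\<Sum>i<?n. g i + g (cyc_succ ?n i) - 2 * (g i * g (cyc_succ ?n i)))"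
    by (rule sum.cong) (auto simp: g_def)
  also have "\<dots> = 2 * ((\<Sum>i<?n. g i) - (\<Sum>i<?n. g i * g (cyc_succ ?n i)))"
    using shift by (simp add: sum.distrib sum_subtractf sum_distrib_left algebra_simps)
  finally have "even (int (card {i. i < ?n \<and> c (cs ! i) \<noteq> c (cs ! cyc_succ ?n i)}))"
    by simp
  then show ?thesis by simp
qed

lemma doubleton_crosses_iff: "{a, b} \<inter> X \<noteq> {} \<and> {a, b} - X \<noteq> {} \<longleftrightarrow> (a \<in> X) \<noteq> (b \<in> X)"
  by auto

lemma even_card_cut_cycle_edges:
  assumes "is_cycle V E cs"
  shows "even (card (cut_edges X (cycle_edges cs)))"
proof -
  have "card (cut_edges X (cycle_edges cs))
      = card {i. i < length cs \<and> (cs ! i \<in> X) \<noteq> (cs ! cyc_succ (length cs) i \<in> X)}"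
    unfolding cut_edges_def card_cycle_edges_indices[OF assms] doubleton_crosses_iff ..
  then show ?thesis using even_card_colour_changes[where c = "\<lambda>v. v \<in> X"] by simp
qed

lemma cut_edges_subset_Int: "F \<subseteq> F' \<Longrightarrow> cut_edges X F = F \<inter> cut_edges X F'"
  unfolding cut_edges_def by blast

lemma even_card_Int_doubleton_iff:
  assumes "even (card (A \<inter> {a, b}))" "a \<noteq> b"
  shows "a \<in> A \<longleftrightarrow> b \<in> A"
  using assms by (cases "a \<in> A"; cases "b \<in> A") (simp_all add: Int_insert_right)

lemma even_card_Int_four_iff:
  assumes "even (card (A \<inter> {a, b, c, d}))" "c \<in> A \<longleftrightarrow> d \<in> A" "distinct [a, b, c, d]"
  shows "a \<in> A \<longleftrightarrow> b \<in> A"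
  using assms by (cases "a \<in> A"; cases "b \<in> A"; cases "c \<in> A") (simp_all add: Int_insert_right)

lemma cycle_no_three_nbrs:
  assumes "is_cycle V E cs" "{v, a} \<in> cycle_edges cs" "{v, b} \<in> cycle_edges cs"
    "{v, c} \<in> cycle_edges cs" "a \<noteq> b" "a \<noteq> c" "b \<noteq> c"
  shows False
proof -
  obtain x y where "\<And>z. {v, z} \<in> cycle_edges cs \<Longrightarrow> z = x \<or> z = y"
    using cycle_degree_two[OF assms(1) cycle_edge_in_set[OF assms(2)]] by metis
  then show False using assms(2-7) by metis
qed

lemma cycle_at_degree_two_vertex:
  assumes "is_cycle V E cs" "\<And>z. {v, z} \<in> E \<Longrightarrow> z = a \<or> z = b"
  shows "{v, a} \<in> cycle_edges cs \<longleftrightarrow> v \<in> set cs" "{v, b} \<in> cycle_edges cs \<longleftrightarrow> v \<in> set cs"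
proof -
  have "{v, a} \<in> cycle_edges cs \<and> {v, b} \<in> cycle_edges cs" if v: "v \<in> set cs"
  proof -
    obtain x y where "x \<noteq> y" "{v, x} \<in> cycle_edges cs" "{v, y} \<in> cycle_edges cs"
      using cycle_degree_two[OF assms(1) v] by metis
    moreover from this have "x = a \<or> x = b" "y = a \<or> y = b"
      using assms(2) cycle_edges_subset[OF assms(1)] by blast+
    ultimately show ?thesis by blast
  qed
  then show "{v, a} \<in> cycle_edges cs \<longleftrightarrow> v \<in> set cs" "{v, b} \<in> cycle_edges cs \<longleftrightarrow> v \<in> set cs"
    using cycle_edge_in_set[of v a cs] cycle_edge_in_set[of v b cs] by blast+
qed

lemma cycle_at_degree_three_vertex:
  assumes "is_cycle V E cs" "\<And>z. {v, z} \<in> E \<Longrightarrow> z = a \<or> z = b \<or> z = c"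
    and "a \<noteq> b" "a \<noteq> c" "b \<noteq> c"
  shows "v \<in> set cs \<longleftrightarrow> {v, a} \<in> cycle_edges cs \<or> {v, b} \<in> cycle_edges cs"
    and "{v, c} \<in> cycle_edges cs \<longleftrightarrow> ({v, a} \<in> cycle_edges cs \<longleftrightarrow> {v, b} \<notin> cycle_edges cs)"
proof -
  have two: "\<exists>x y. x \<noteq> y \<and> {v, x} \<in> cycle_edges cs \<and> {v, y} \<in> cycle_edges cs
      \<and> x \<in> {a, b, c} \<and> y \<in> {a, b, c}" if v: "v \<in> set cs"
  proof -
    obtain x y where "x \<noteq> y" "{v, x} \<in> cycle_edges cs" "{v, y} \<in> cycle_edges cs"
      using cycle_degree_two[OF assms(1) v] by metis
    then show ?thesis using assms(2) cycle_edges_subset[OF assms(1)] by blast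
  qed
  have not_all: "\<not> ({v, a} \<in> cycle_edges cs \<and> {v, b} \<in> cycle_edges cs \<and> {v, c} \<in> cycle_edges cs)"
    using cycle_no_three_nbrs[OF assms(1) _ _ _ assms(3-5)] by blast
  note in_set = cycle_edge_in_set[of v a cs] cycle_edge_in_set[of v b cs]
    cycle_edge_in_set[of v c cs]
  show "v \<in> set cs \<longleftrightarrow> {v, a} \<in> cycle_edges cs \<or> {v, b} \<in> cycle_edges cs"
    using two in_set by blast
  show "{v, c} \<in> cycle_edges cs \<longleftrightarrow> ({v, a} \<in> cycle_edges cs \<longleftrightarrow> {v, b} \<notin> cycle_edges cs)"
    using two not_all in_set by blast
qed

lemma cycle_through_triangle:
  assumes "is_cycle V E cs" "{a, b} \<in> cycle_edges cs" "{b, c} \<in> cycle_edges cs"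
    "{c, a} \<in> cycle_edges cs" "a \<noteq> b" "a \<noteq> c" "b \<noteq> c"
  shows "length cs = 3"
proof -
  have "set cs \<subseteq> {a, b, c}"
  proof (rule ccontr)
    assume "\<not> ?thesis"
    then obtain d where "d \<in> set cs" "d \<notin> {a, b, c}" by blast
    moreover have "a \<in> set cs" by (rule cycle_edge_in_set[OF assms(2)])
    ultimately obtain u w where "{u, w} \<in> cycle_edges cs" "u \<in> {a, b, c}" "w \<notin> {a, b, c}"
      using cycle_crosses_twice[OF assms(1), of a "{a, b, c}" d] by blast
    moreover have "{b, a} \<in> cycle_edges cs" "{c, b} \<in> cycle_edges cs" "{a, c} \<in> cycle_edges cs"
      using assms(2-4) by (simp_all add: insert_commute)
    ultimately show False
      using cycle_no_three_nbrs[OF assms(1), of a b c w] cycle_no_three_nbrs[OF assms(1), of b a c w]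
        cycle_no_three_nbrs[OF assms(1), of c a b w] assms(2-7) by auto
  qed
  then have "card (set cs) \<le> card {a, b, c}" by (intro card_mono) simp_all
  then have "length cs \<le> 3"
    using assms(1,5-7) distinct_card[of cs] by (simp add: is_cycle_def)
  then show ?thesis using assms(1) by (simp add: is_cycle_def)
qed

section \<open>Perfect matchings and graph isomorphisms\<close>

lemma perfect_matchingI:
  assumes "M \<subseteq> F" "U \<subseteq> \<Union>M" "pairwise disjnt M"
  shows "perfect_matching U F M"
  using assms unfolding perfect_matching_def pairwise_def disjnt_def by blast

lemma pairwise_disjnt_Un:
  "pairwise disjnt A \<Longrightarrow> pairwise disjnt B \<Longrightarrow> \<Union>A \<inter> \<Union>B = {} \<Longrightarrow> pairwise disjnt (A \<union> B)"
  unfolding pairwise_def disjnt_def by blast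

lemma subset_del_verts_E: "M \<subseteq> E \<Longrightarrow> \<Union>M \<inter> S = {} \<Longrightarrow> M \<subseteq> del_verts_E E S"
  unfolding del_verts_E_def by blast

lemma perfect_matching_image:
  assumes inj: "inj_on f V0" and "U \<subseteq> V0" and edges: "\<And>e. e \<in> M \<Longrightarrow> e \<subseteq> V0"
    and pm: "perfect_matching U F M"
  shows "perfect_matching (f ` U) ((`) f ` F) ((`) f ` M)"
  unfolding perfect_matching_def
proof (intro conjI ballI)
  show "(`) f ` M \<subseteq> (`) f ` F" using pm unfolding perfect_matching_def by blast
next
  fix v' assume "v' \<in> f ` U"
  then obtain v where v: "v \<in> U" "v' = f v" by blast
  obtain e where e: "e \<in> M" "v \<in> e" and unique: "\<And>e'. e' \<in> M \<Longrightarrow> v \<in> e' \<Longrightarrow> e' = e"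
    using pm v(1) unfolding perfect_matching_def by metis
  show "\<exists>!e'. e' \<in> (`) f ` M \<and> v' \<in> e'"
  proof (rule ex1I[of _ "f ` e"])
    show "f ` e \<in> (`) f ` M \<and> v' \<in> f ` e" using e v(2) by blast
  next
    fix e' assume e': "e' \<in> (`) f ` M \<and> v' \<in> e'"
    then obtain e1 w where "e1 \<in> M" "e' = f ` e1" "w \<in> e1" "f w = f v" using v(2) by auto
    moreover from this have "w = v"
      using inj edges \<open>U \<subseteq> V0\<close> v(1) by (meson inj_onD subsetD)
    ultimately show "e' = f ` e" using unique by blast
  qed
qed

lemma del_verts_E_image:
  assumes "inj_on f V0" "\<And>e. e \<in> E0 \<Longrightarrow> e \<subseteq> V0" "S \<subseteq> V0"
  shows "(`) f ` del_verts_E E0 S = del_verts_E ((`) f ` E0) (f ` S)"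
proof -
  have "f ` e \<inter> f ` S = f ` (e \<inter> S)" if "e \<in> E0" for e
    using inj_on_image_Int[OF assms(1)] assms(2)[OF that] assms(3) by blast
  then show ?thesis unfolding del_verts_E_def by auto
qed

lemma is_cycle_image:
  assumes "inj_on f V0" "is_cycle V0 E0 cs"
  shows "is_cycle (f ` V0) ((`) f ` E0) (map f cs)"
  unfolding is_cycle_def
proof (intro conjI allI impI)
  have "set cs \<subseteq> V0" "distinct cs" "length cs \<ge> 3" using assms(2) by (auto simp: is_cycle_def)
  then show "3 \<le> length (map f cs)" "distinct (map f cs)" "set (map f cs) \<subseteq> f ` V0"
    using assms(1) by (auto simp: distinct_map inj_on_subset)
next
  fix i assume i: "i < length (map f cs)"
  then have "Suc i mod length cs < length cs" by (intro mod_less_divisor) auto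
  then have "{map f cs ! i, map f cs ! (Suc i mod length (map f cs))}
      = f ` {cs ! i, cs ! (Suc i mod length cs)}" using i by simp
  moreover have "{cs ! i, cs ! (Suc i mod length cs)} \<in> E0"
    using assms(2) i by (simp add: is_cycle_def)
  ultimately show "{map f cs ! i, map f cs ! ((i + 1) mod length (map f cs))} \<in> (`) f ` E0"
    by (metis Suc_eq_plus1 image_eqI length_map)
qed

lemma simple_graph_edge_subset: "simple_graph V E \<Longrightarrow> e \<in> E \<Longrightarrow> e \<subseteq> V"
  unfolding simple_graph_def by fastforce

lemma simple_graph_image:
  assumes "inj_on f V0" "simple_graph V0 E0"
  shows "simple_graph (f ` V0) ((`) f ` E0)"
  unfolding simple_graph_def
proof (intro conjI ballI)
  show "finite (f ` V0)" using assms(2) by (simp add: simple_graph_def)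
next
  fix e' assume "e' \<in> (`) f ` E0"
  then obtain e where e: "e \<in> E0" "e' = f ` e" by blast
  then obtain x y where "x \<noteq> y" "x \<in> V0" "y \<in> V0" "e = {x, y}"
    using assms(2) unfolding simple_graph_def by blast
  then show "\<exists>x y. x \<noteq> y \<and> x \<in> f ` V0 \<and> y \<in> f ` V0 \<and> e' = {x, y}"
    using inj_onD[OF assms(1)] e(2) by (intro exI[of _ "f x"] exI[of _ "f y"]) auto
qed

lemma rtranclp_edges_image:
  assumes "(\<lambda>a b. {a, b} \<in> E)\<^sup>*\<^sup>* x y"
  shows "(\<lambda>a b. {a, b} \<in> (`) f ` E)\<^sup>*\<^sup>* (f x) (f y)"
  using assms
proof (induction rule: rtranclp_induct)
  case (step y z)
  have "f ` {y, z} \<in> (`) f ` E" using step(2) by (rule imageI)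
  then have "{f y, f z} \<in> (`) f ` E" by simp
  with step.IH show ?case by (rule rtranclp.rtrancl_into_rtrancl)
qed simp

lemma graph_connected_image:
  assumes "graph_connected V0 E0"
  shows "graph_connected (f ` V0) ((`) f ` E0)"
  unfolding graph_connected_def
proof (intro ballI)
  fix x' y' assume "x' \<in> f ` V0" "y' \<in> f ` V0"
  then obtain x y where "x \<in> V0" "y \<in> V0" "x' = f x" "y' = f y" by blast
  then show "(\<lambda>a b. {a, b} \<in> (`) f ` E0)\<^sup>*\<^sup>* x' y'"
    using assms rtranclp_edges_image unfolding graph_connected_def by metis
qed

lemma matching_covered_image:
  assumes bij: "bij_betw f V0 V" and mc: "matching_covered V0 E0"
  shows "matching_covered V ((`) f ` E0)"
proof -
  have inj: "inj_on f V0" and V: "V = f ` V0" using bij by (auto simp: bij_betw_def)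
  have sg: "simple_graph V0 E0" using mc by (simp add: matching_covered_def)
  have "\<exists>M'. perfect_matching V ((`) f ` E0) M' \<and> f ` e \<in> M'" if "e \<in> E0" for e
  proof -
    obtain M where M: "perfect_matching V0 E0 M" "e \<in> M"
      using mc \<open>e \<in> E0\<close> by (auto simp: matching_covered_def)
    have "\<And>e. e \<in> M \<Longrightarrow> e \<subseteq> V0"
      using M(1) simple_graph_edge_subset[OF sg] by (auto simp: perfect_matching_def)
    from perfect_matching_image[OF inj order_refl this M(1)] M(2) show ?thesis
      unfolding V by blast
  qed
  then show ?thesis
    using mc simple_graph_image[OF inj sg] graph_connected_image bij_betw_same_card[OF bij]
    unfolding matching_covered_def V by auto
qed

lemma inv_into_image_edges:
  assumes "inj_on f V0" "\<And>e. e \<in> E0 \<Longrightarrow> e \<subseteq> V0"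
  shows "(`) (inv_into V0 f) ` (`) f ` E0 = E0"
proof -
  have cancel: "inv_into V0 f ` f ` e = e" if "e \<in> E0" for e
    using inv_into_image_cancel[OF assms(1) assms(2)[OF that]] .
  show ?thesis
  proof
    show "(`) (inv_into V0 f) ` (`) f ` E0 \<subseteq> E0" using cancel by auto
    show "E0 \<subseteq> (`) (inv_into V0 f) ` (`) f ` E0" using cancel by (metis image_eqI subsetI)
  qed
qed

lemma cycle_extendable_image:
  assumes bij: "bij_betw f V0 V" and ce: "cycle_extendable V0 E0"
  shows "cycle_extendable V ((`) f ` E0)"
  unfolding cycle_extendable_def
proof (intro conjI allI impI)
  have mc: "matching_covered V0 E0" using ce by (simp add: cycle_extendable_def)
  then show "matching_covered V ((`) f ` E0)" by (rule matching_covered_image[OF bij])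
  have inj: "inj_on f V0" and V: "V = f ` V0" using bij by (auto simp: bij_betw_def)
  have edges: "\<And>e. e \<in> E0 \<Longrightarrow> e \<subseteq> V0"
    using mc simple_graph_edge_subset by (auto simp: matching_covered_def)
  define g where "g = inv_into V0 f"
  have g_bij: "bij_betw g V V0" unfolding g_def V by (rule bij_betw_inv_into[OF bij[unfolded V]])
  fix cs assume "even_cycle V ((`) f ` E0) cs"
  then have cyc: "is_cycle V ((`) f ` E0) cs" and "even (length cs)" and cs: "set cs \<subseteq> V"
    by (auto simp: even_cycle_def is_cycle_def)
  have "is_cycle (g ` V) ((`) g ` (`) f ` E0) (map g cs)"
    by (rule is_cycle_image[OF bij_betw_imp_inj_on[OF g_bij] cyc])
  then have "even_cycle V0 E0 (map g cs)"
    using \<open>even (length cs)\<close> bij_betw_imp_surj_on[OF g_bij] inv_into_image_edges[OF inj edges]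
    by (simp add: even_cycle_def g_def)
  then obtain M where M: "perfect_matching (V0 - g ` set cs) (del_verts_E E0 (g ` set cs)) M"
    using ce by (auto simp: cycle_extendable_def has_perfect_matching_def)
  have "g ` set cs \<subseteq> V0" using cs g_bij by (auto simp: bij_betw_def)
  moreover have f_g: "f ` g ` set cs = set cs"
    using cs unfolding g_def V by (auto simp: image_image f_inv_into_f intro!: image_eqI)
  moreover have "\<And>e. e \<in> M \<Longrightarrow> e \<subseteq> V0"
    using M edges by (auto simp: perfect_matching_def del_verts_E_def)
  ultimately have "perfect_matching (f ` (V0 - g ` set cs)) (del_verts_E ((`) f ` E0) (set cs)) ((`) f ` M)"
    using perfect_matching_image[OF inj Diff_subset _ M] del_verts_E_image[OF inj edges] by metis
  moreover have "f ` (V0 - g ` set cs) = V - set cs"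
    using inj_on_image_set_diff[OF inj] \<open>g ` set cs \<subseteq> V0\<close> f_g V by auto
  ultimately show "has_perfect_matching (V - set cs) (del_verts_E ((`) f ` E0) (set cs))"
    unfolding has_perfect_matching_def by auto
qed

section \<open>The model graphs\<close>

lemma g3_hexagon_edges:
  "{{CV i, CV ((i + 1) mod 6)} | i. i < 6} =
    {{CV 0, CV 1}, {CV 1, CV 2}, {CV 2, CV 3}, {CV 3, CV 4}, {CV 4, CV 5}, {CV 5, CV 0}}"
proof -
  have "{{CV i, CV ((i + 1) mod 6)} | i. i < 6} = (\<lambda>i. {CV i, CV ((i + 1) mod 6)}) ` {..<6}"
    by blast
  moreover have "{..<6::nat} = {0, 1, 2, 3, 4, 5}" by auto
  moreover have "((0::nat) + 1) mod 6 = 1" "((1::nat) + 1) mod 6 = 2" "((2::nat) + 1) mod 6 = 3"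
    "((3::nat) + 1) mod 6 = 4" "((4::nat) + 1) mod 6 = 5" "((5::nat) + 1) mod 6 = 0" by simp_all
  ultimately show ?thesis by (simp only: image_insert image_empty)
qed

lemma g3_E_explicit: "g3_E k =
     {{CV 0, CV 1}, {CV 1, CV 2}, {CV 2, CV 3}, {CV 3, CV 4}, {CV 4, CV 5}, {CV 5, CV 0}}
   \<union> {{PV j, PV (j + 1)} | j. j < 2 * k}
   \<union> {{HB, PV (2 * j)} | j. j \<le> k}
   \<union> {{HB, CV 4}, {PV (2 * k), CV 1}, {CV 3, HB}, {CV 0, PV 0}}"
  unfolding g3_E_def g3_hexagon_edges ..

lemma CV_image_lessThan_6: "CV ` {..<6} = {CV 0, CV 1, CV 2, CV 3, CV 4, CV 5}"
proof -
  have "{..<6::nat} = {0, 1, 2, 3, 4, 5}" by auto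
  then show ?thesis by simp
qed

lemma g3_V_explicit: "g3_V k = CV ` {..<6} \<union> PV ` {..2 * k} \<union> {HB}"
  unfolding g3_V_def by blast

lemma g3_V_iff [simp]:
  "CV i \<in> g3_V k \<longleftrightarrow> i < 6" "PV x \<in> g3_V k \<longleftrightarrow> x \<le> 2 * k" "HB \<in> g3_V k"
  unfolding g3_V_def by auto

lemma g3_V_cases:
  assumes "v \<in> g3_V k"
  obtains (hexagon) i where "i < 6" "v = CV i" | (path) x where "x \<le> 2 * k" "v = PV x" | (hub) "v = HB"
  using assms unfolding g3_V_def by auto

lemma g3_E_cases:
  assumes "e \<in> g3_E k"
  obtains (hexagon) "e \<in> {{CV 0, CV 1}, {CV 1, CV 2}, {CV 2, CV 3}, {CV 3, CV 4}, {CV 4, CV 5}, {CV 5, CV 0}}"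
    | (path) j where "j < 2 * k" "e = {PV j, PV (j + 1)}"
    | (hub) j where "j \<le> k" "e = {HB, PV (2 * j)}"
    | (extra) "e \<in> {{HB, CV 4}, {PV (2 * k), CV 1}, {CV 3, HB}, {CV 0, PV 0}}"
  using assms unfolding g3_E_explicit Un_iff mem_Collect_eq by metis

lemma g3_fixed_edges:
  "{CV 0, CV 1} \<in> g3_E k" "{CV 1, CV 2} \<in> g3_E k" "{CV 2, CV 3} \<in> g3_E k"
  "{CV 3, CV 4} \<in> g3_E k" "{CV 4, CV 5} \<in> g3_E k" "{CV 5, CV 0} \<in> g3_E k"
  "{HB, CV 4} \<in> g3_E k" "{PV (2 * k), CV 1} \<in> g3_E k" "{CV 3, HB} \<in> g3_E k" "{CV 0, PV 0} \<in> g3_E k"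
  unfolding g3_E_explicit by simp_all

lemma g3_path_edge: "x < 2 * k \<Longrightarrow> {PV x, PV (x + 1)} \<in> g3_E k"
  unfolding g3_E_def by (intro UnI1 UnI2) blast

lemma g3_hub_edge: "even x \<Longrightarrow> x \<le> 2 * k \<Longrightarrow> {HB, PV x} \<in> g3_E k"
  unfolding g3_E_def by (intro UnI1 UnI2) (auto elim!: evenE)

lemma g3_nbrs_PV:
  assumes "{PV x, z} \<in> g3_E k"
  shows "z = PV (x + 1) \<and> x < 2 * k \<or> z = PV (x - 1) \<and> 0 < x \<and> x \<le> 2 * k
    \<or> z = HB \<and> even x \<and> x \<le> 2 * k \<or> z = CV 0 \<and> x = 0 \<or> z = CV 1 \<and> x = 2 * k"
  using assms unfolding g3_E_explicit by (auto simp: doubleton_eq_iff)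

lemma g3_nbrs_HB: "{HB, z} \<in> g3_E k \<Longrightarrow> (\<exists>x. z = PV x) \<or> z = CV 4 \<or> z = CV 3"
  unfolding g3_E_explicit by (auto simp: doubleton_eq_iff)

lemma g3_nbrs_CV:
  "{CV 0, z} \<in> g3_E k \<Longrightarrow> z = CV 1 \<or> z = CV 5 \<or> z = PV 0"
  "{CV 1, z} \<in> g3_E k \<Longrightarrow> z = CV 0 \<or> z = CV 2 \<or> z = PV (2 * k)"
  "{CV 2, z} \<in> g3_E k \<Longrightarrow> z = CV 1 \<or> z = CV 3"
  "{CV 3, z} \<in> g3_E k \<Longrightarrow> z = CV 2 \<or> z = CV 4 \<or> z = HB"
  "{CV 4, z} \<in> g3_E k \<Longrightarrow> z = CV 3 \<or> z = CV 5 \<or> z = HB"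
  "{CV 5, z} \<in> g3_E k \<Longrightarrow> z = CV 4 \<or> z = CV 0"
  unfolding g3_E_explicit by (auto simp: doubleton_eq_iff)

lemma simple_graph_g3: "simple_graph (g3_V k) (g3_E k)"
  unfolding simple_graph_def
proof (intro conjI ballI)
  show "finite (g3_V k)" by (simp add: g3_V_explicit)
next
  fix e assume "e \<in> g3_E k"
  then have "e \<subseteq> g3_V k \<and> card e = 2" by (cases rule: g3_E_cases) auto
  then show "\<exists>x y. x \<noteq> y \<and> x \<in> g3_V k \<and> y \<in> g3_V k \<and> e = {x, y}"
    by (auto simp: card_2_iff)
qed

definition g3_colour :: "g3v \<Rightarrow> bool" where
  "g3_colour v = (case v of CV i \<Rightarrow> even i | PV x \<Rightarrow> odd x | HB \<Rightarrow> True)"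

lemma cut_edges_g3_colour:
  "cut_edges {v. g3_colour v} (g3_E k) = g3_E k - {{HB, CV 4}, {PV (2 * k), CV 1}}"
proof -
  have "e \<inter> {v. g3_colour v} \<noteq> {} \<and> e - {v. g3_colour v} \<noteq> {}
      \<longleftrightarrow> e \<noteq> {HB, CV 4} \<and> e \<noteq> {PV (2 * k), CV 1}" if "e \<in> g3_E k" for e
    using that
  proof (cases rule: g3_E_cases)
    case hexagon
    then show ?thesis by (elim insertE emptyE) (simp_all add: g3_colour_def doubleton_eq_iff)
  next
    case (path j)
    then show ?thesis by (simp add: g3_colour_def doubleton_eq_iff)
  next
    case (hub j)
    then show ?thesis by (simp add: g3_colour_def doubleton_eq_iff)
  next
    case extra
    then show ?thesis by (elim insertE emptyE) (simp_all add: g3_colour_def doubleton_eq_iff)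
  qed
  then show ?thesis unfolding cut_edges_def by blast
qed

lemma cut_edges_g3_hexagon:
  "cut_edges (CV ` {..<6}) (g3_E k) = {{CV 0, PV 0}, {PV (2 * k), CV 1}, {CV 3, HB}, {HB, CV 4}}"
proof -
  have crosses: "e \<inter> CV ` {..<6} \<noteq> {} \<and> e - CV ` {..<6} \<noteq> {}
      \<longleftrightarrow> e \<in> {{CV 0, PV 0}, {PV (2 * k), CV 1}, {CV 3, HB}, {HB, CV 4}}" if "e \<in> g3_E k" for e
    using that
  proof (cases rule: g3_E_cases)
    case hexagon
    then show ?thesis by (elim insertE emptyE) (simp_all add: doubleton_eq_iff)
  next
    case (path j)
    then show ?thesis by (simp add: doubleton_eq_iff image_iff)
  next
    case (hub j)
    then show ?thesis by (simp add: doubleton_eq_iff image_iff)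
  next
    case extra
    then show ?thesis by (elim insertE emptyE) (simp_all add: doubleton_eq_iff image_iff)
  qed
  have "cut_edges (CV ` {..<6}) (g3_E k)
      = {e \<in> g3_E k. e \<in> {{CV 0, PV 0}, {PV (2 * k), CV 1}, {CV 3, HB}, {HB, CV 4}}}"
    unfolding cut_edges_def by (rule Collect_cong, rule conj_cong, rule refl, erule crosses)
  also have "\<dots> = {{CV 0, PV 0}, {PV (2 * k), CV 1}, {CV 3, HB}, {HB, CV 4}}"
    using g3_fixed_edges by (auto simp del: insert_iff)
  finally show ?thesis .
qed

definition path_pairs :: "nat \<Rightarrow> nat \<Rightarrow> nat \<Rightarrow> g3v set set" where
  "path_pairs k lo hi = {{PV x, PV (x + 1)} | x. even x \<and> x < lo \<or> odd x \<and> hi < x \<and> x < 2 * k}"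

lemma path_pairs_subset: "lo \<le> 2 * k \<Longrightarrow> path_pairs k lo hi \<subseteq> g3_E k"
  unfolding path_pairs_def using g3_path_edge by fastforce

lemma pairwise_disjnt_path_pairs: "lo \<le> hi \<Longrightarrow> pairwise disjnt (path_pairs k lo hi)"
  unfolding path_pairs_def pairwise_def disjnt_def by (auto simp: doubleton_eq_iff)

lemma Union_path_pairs:
  assumes "even lo" "even hi" "lo \<le> hi" "hi \<le> 2 * k"
  shows "\<Union>(path_pairs k lo hi) = PV ` {x. x \<le> 2 * k \<and> (x < lo \<or> hi < x)}"
proof
  show "\<Union>(path_pairs k lo hi) \<subseteq> PV ` {x. x \<le> 2 * k \<and> (x < lo \<or> hi < x)}"
    unfolding path_pairs_def using assms by (auto elim!: evenE oddE)
next
  show "PV ` {x. x \<le> 2 * k \<and> (x < lo \<or> hi < x)} \<subseteq> \<Union>(path_pairs k lo hi)"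
  proof clarify
    fix x assume x: "x \<le> 2 * k" "x < lo \<or> hi < x"
    show "PV x \<in> \<Union>(path_pairs k lo hi)"
    proof (cases "even x \<and> x < lo \<or> odd x \<and> hi < x \<and> x < 2 * k")
      case True
      then show ?thesis unfolding path_pairs_def by blast
    next
      case False
      then have "even (x - 1) \<and> x - 1 < lo \<or> odd (x - 1) \<and> hi < x - 1 \<and> x - 1 < 2 * k" "x \<noteq> 0"
        using assms x by presburger+
      then have "{PV (x - 1), PV (x - 1 + 1)} \<in> path_pairs k lo hi" unfolding path_pairs_def by blast
      then show ?thesis using \<open>x \<noteq> 0\<close> by auto
    qed
  qed
qed

lemma perfect_matching_path_pairs_Un:
  assumes "even lo" "even hi" "lo \<le> hi" "hi \<le> 2 * k" "U \<subseteq> g3_V k"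
    and "path_pairs k lo hi \<union> X \<subseteq> F" "pairwise disjnt X"
    and X: "\<Union>X = U - PV ` {x. x < lo \<or> hi < x}"
  shows "perfect_matching U F (path_pairs k lo hi \<union> X)"
proof (rule perfect_matchingI)
  have pairs: "\<Union>(path_pairs k lo hi) = PV ` {x. x \<le> 2 * k \<and> (x < lo \<or> hi < x)}"
    using Union_path_pairs assms(1-4) .
  show "U \<subseteq> \<Union>(path_pairs k lo hi \<union> X)"
    unfolding Union_Un_distrib pairs X using \<open>U \<subseteq> g3_V k\<close> by auto
  show "pairwise disjnt (path_pairs k lo hi \<union> X)"
    using pairwise_disjnt_path_pairs[OF \<open>lo \<le> hi\<close>] \<open>pairwise disjnt X\<close>
    by (rule pairwise_disjnt_Un) (auto simp: pairs X)
qed (fact assms)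

lemma g3_V_minus_path:
  "m \<le> 2 * k \<Longrightarrow> g3_V k - PV ` {x. x < m \<or> m < x} = {HB, PV m, CV 0, CV 1, CV 2, CV 3, CV 4, CV 5}"
  by (auto elim!: g3_V_cases)

lemma perfect_matching_g3:
  assumes "even m" "m \<le> 2 * k" "X \<subseteq> g3_E k" "pairwise disjnt X"
    and "\<Union>X = {HB, PV m, CV 0, CV 1, CV 2, CV 3, CV 4, CV 5}"
  shows "perfect_matching (g3_V k) (g3_E k) (path_pairs k m m \<union> X)"
  using assms path_pairs_subset[of m k m] g3_V_minus_path[of m k]
  by (intro perfect_matching_path_pairs_Un) auto

lemma graph_connected_g3: "graph_connected (g3_V k) (g3_E k)"
proof -
  let ?R = "\<lambda>a b. {a, b} \<in> g3_E k"
  have "symp ?R" by (auto intro: sympI simp: insert_commute)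
  then have sym: "symp ?R\<^sup>*\<^sup>*" by (rule symp_rtranclp)
  have path: "?R\<^sup>*\<^sup>* HB (PV x)" if "x \<le> 2 * k" for x
    using that
  proof (induction x)
    case 0
    then show ?case using g3_hub_edge[of 0 k] by auto
  next
    case (Suc x)
    then show ?case using g3_path_edge[of x k] by (auto intro: rtranclp.rtrancl_into_rtrancl)
  qed
  have "?R\<^sup>*\<^sup>* HB (CV 0)"
    using path[of 0] g3_fixed_edges(10)[of k] by (auto simp: insert_commute intro: rtranclp.rtrancl_into_rtrancl)
  moreover have "{CV i, CV (Suc i)} \<in> g3_E k" if "i < 5" for i
  proof -
    have "{CV i, CV ((i + 1) mod 6)} \<in> g3_E k" using that unfolding g3_E_def by (intro UnI1) auto
    then show ?thesis using that by simp
  qed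
  ultimately have hexagon: "?R\<^sup>*\<^sup>* HB (CV i)" if "i < 6" for i
    using that by (induction i) (auto intro: rtranclp.rtrancl_into_rtrancl)
  have "?R\<^sup>*\<^sup>* HB v" if "v \<in> g3_V k" for v
    using that by (cases rule: g3_V_cases) (auto intro: path hexagon)
  then show ?thesis
    unfolding graph_connected_def using sym by (meson rtranclp_trans sympD)
qed

lemma perfect_matching_g3_hub:
  assumes "even m" "m \<le> 2 * k"
    and "H = {{CV 0, CV 1}, {CV 2, CV 3}, {CV 4, CV 5}} \<or> H = {{CV 1, CV 2}, {CV 3, CV 4}, {CV 5, CV 0}}"
  shows "perfect_matching (g3_V k) (g3_E k) (path_pairs k m m \<union> insert {HB, PV m} H)"
  using assms g3_hub_edge[OF assms(1,2)] g3_fixed_edges[of k]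
  by (intro perfect_matching_g3) (auto simp: pairwise_insert disjnt_def)

lemma g3_edge_in_perfect_matching:
  assumes "e \<in> g3_E k"
  shows "\<exists>M. perfect_matching (g3_V k) (g3_E k) M \<and> e \<in> M"
proof -
  let ?A = "{{CV 0, CV 1}, {CV 2, CV 3}, {CV 4, CV 5}}" and ?B = "{{CV 1, CV 2}, {CV 3, CV 4}, {CV 5, CV 0}}"
  from assms show ?thesis
  proof (cases rule: g3_E_cases)
    case hexagon
    then have "e \<in> ?A \<or> e \<in> ?B" by (elim insertE emptyE) simp_all
    then obtain H where "H = ?A \<or> H = ?B" "e \<in> H" by blast
    moreover from this have "e \<in> path_pairs k 0 0 \<union> insert {HB, PV 0} H" by blast
    ultimately show ?thesis using perfect_matching_g3_hub[of 0 k H] by blast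
  next
    case (path j)
    obtain m where "even m" "m \<le> 2 * k" "e \<in> path_pairs k m m"
    proof (cases "even j")
      case True
      then have "e \<in> path_pairs k (2 * k) (2 * k)" using path unfolding path_pairs_def by blast
      then show ?thesis using that[of "2 * k"] by simp
    next
      case False
      then have "e \<in> path_pairs k 0 0" using path unfolding path_pairs_def by auto
      then show ?thesis using that[of 0] by simp
    qed
    then show ?thesis using perfect_matching_g3_hub[of m k ?A] by blast
  next
    case (hub j)
    then have "e \<in> path_pairs k (2 * j) (2 * j) \<union> insert {HB, PV (2 * j)} ?A" by blast
    then show ?thesis using perfect_matching_g3_hub[of "2 * j" k ?A] hub(1) by auto
  next
    case extra
    have "perfect_matching (g3_V k) (g3_E k)
        (path_pairs k (2 * k) (2 * k) \<union> {{HB, CV 4}, {CV 5, CV 0}, {CV 2, CV 3}, {PV (2 * k), CV 1}})"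
      using g3_fixed_edges[of k] by (intro perfect_matching_g3) (auto simp: pairwise_insert)
    moreover have "perfect_matching (g3_V k) (g3_E k)
        (path_pairs k 0 0 \<union> {{CV 3, HB}, {CV 4, CV 5}, {CV 1, CV 2}, {CV 0, PV 0}})"
      using g3_fixed_edges[of k] by (intro perfect_matching_g3) (auto simp: pairwise_insert)
    ultimately show ?thesis using extra by blast
  qed
qed

lemma matching_covered_g3: "matching_covered (g3_V k) (g3_E k)"
  unfolding matching_covered_def
proof (intro conjI ballI)
  show "simple_graph (g3_V k) (g3_E k)" by (rule simple_graph_g3)
  show "graph_connected (g3_V k) (g3_E k)" by (rule graph_connected_g3)
  have "card {CV 0, CV 1} \<le> card (g3_V k)" by (rule card_mono) (simp_all add: g3_V_explicit)
  then show "2 \<le> card (g3_V k)" by simp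
qed (rule g3_edge_in_perfect_matching)

lemma hexagon_remainder_matchable:
  assumes "T \<in> {{}, CV ` {..<6}, {CV 4, CV 5}, {CV 5, CV 0}, {CV 2, CV 3}, {CV 1, CV 2}}"
  obtains H where "H \<subseteq> g3_E k" "pairwise disjnt H" "\<Union>H = T"
proof -
  let ?A = "{{CV 0, CV 1}, {CV 2, CV 3}, {CV 4, CV 5}}"
  have "pairwise disjnt ?A" by (auto simp: pairwise_insert)
  moreover have "\<Union>?A = CV ` {..<6}" by (auto simp: CV_image_lessThan_6)
  ultimately show ?thesis
    using assms g3_fixed_edges[of k] that[of "{}"] that[of ?A] that[of "{{CV 4, CV 5}}"]
      that[of "{{CV 5, CV 0}}"] that[of "{{CV 2, CV 3}}"] that[of "{{CV 1, CV 2}}"]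
    by (elim insertE emptyE) simp_all
qed

section \<open>Even cycles of the model\<close>

locale g3_cycle =
  fixes k :: nat and cs :: "g3v list"
  assumes cycle: "is_cycle (g3_V k) (g3_E k) cs" and even_length: "even (length cs)"
begin

abbreviation C :: "g3v set set" where "C \<equiv> cycle_edges cs"

lemma edge_ends_on_cycle: "{a, b} \<in> C \<Longrightarrow> a \<in> set cs \<and> b \<in> set cs"
  using cycle_edge_in_set[of a b cs] cycle_edge_in_set[of b a cs] by (simp add: insert_commute)

lemma edges_subset: "C \<subseteq> g3_E k"
  by (rule cycle_edges_subset[OF cycle])

lemma finite_edges: "finite C"
  by (simp add: cycle_edges_def)

text \<open>The cycle crosses the colour classes an even number of times and has even length.\<close>

lemma monochromatic_edges_parity: "{HB, CV 4} \<in> C \<longleftrightarrow> {PV (2 * k), CV 1} \<in> C"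
proof -
  let ?M = "{{HB, CV 4}, {PV (2 * k), CV 1}}"
  have "cut_edges {v. g3_colour v} C = C \<inter> (g3_E k - ?M)"
    by (simp add: cut_edges_subset_Int[OF edges_subset] cut_edges_g3_colour)
  also have "\<dots> = C - ?M" using edges_subset by blast
  finally have "even (card (C - ?M))" using even_card_cut_cycle_edges[OF cycle] by metis
  then have "even (card (C \<inter> ?M))"
    using card_Int_Diff[OF finite_edges, of ?M] card_cycle_edges[OF cycle] even_length by auto
  then show ?thesis by (rule even_card_Int_doubleton_iff) (simp add: doubleton_eq_iff)
qed

text \<open>Of the four edges leaving the hexagon the cycle uses an even number, and
  \<open>HB\<close>--\<open>CV 4\<close>, \<open>PV (2k)\<close>--\<open>CV 1\<close> come as a pair.\<close>

lemma hexagon_ports_parity: "{CV 0, PV 0} \<in> C \<longleftrightarrow> {CV 3, HB} \<in> C"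
proof -
  have "cut_edges (CV ` {..<6}) C = C \<inter> {{CV 0, PV 0}, {CV 3, HB}, {PV (2 * k), CV 1}, {HB, CV 4}}"
    by (auto simp: cut_edges_subset_Int[OF edges_subset] cut_edges_g3_hexagon)
  then have "even (card (C \<inter> {{CV 0, PV 0}, {CV 3, HB}, {PV (2 * k), CV 1}, {HB, CV 4}}))"
    using even_card_cut_cycle_edges[OF cycle] by metis
  then show ?thesis
    using monochromatic_edges_parity[symmetric] by (rule even_card_Int_four_iff) (auto simp: doubleton_eq_iff)
qed

lemma no_hub_triangle: "\<not> ({CV 3, HB} \<in> C \<and> {CV 3, CV 4} \<in> C \<and> {HB, CV 4} \<in> C)"
proof
  assume "{CV 3, HB} \<in> C \<and> {CV 3, CV 4} \<in> C \<and> {HB, CV 4} \<in> C"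
  then have "length cs = 3"
    by (intro cycle_through_triangle[OF cycle, of "CV 3" HB "CV 4"]) (auto simp: insert_commute)
  then show False using even_length by simp
qed

lemma hexagon_degree_conditions:
  "{CV 1, CV 2} \<in> C \<longleftrightarrow> CV 2 \<in> set cs" "{CV 2, CV 3} \<in> C \<longleftrightarrow> CV 2 \<in> set cs"
  "{CV 4, CV 5} \<in> C \<longleftrightarrow> CV 5 \<in> set cs" "{CV 5, CV 0} \<in> C \<longleftrightarrow> CV 5 \<in> set cs"
  "CV 0 \<in> set cs \<longleftrightarrow> {CV 0, CV 1} \<in> C \<or> {CV 5, CV 0} \<in> C"
  "CV 1 \<in> set cs \<longleftrightarrow> {CV 0, CV 1} \<in> C \<or> {CV 1, CV 2} \<in> C"
  "CV 3 \<in> set cs \<longleftrightarrow> {CV 2, CV 3} \<in> C \<or> {CV 3, CV 4} \<in> C"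
  "CV 4 \<in> set cs \<longleftrightarrow> {CV 3, CV 4} \<in> C \<or> {CV 4, CV 5} \<in> C"
  "{PV (2 * k), CV 1} \<in> C \<longleftrightarrow> ({CV 0, CV 1} \<in> C \<longleftrightarrow> {CV 1, CV 2} \<notin> C)"
  "{CV 3, HB} \<in> C \<longleftrightarrow> ({CV 2, CV 3} \<in> C \<longleftrightarrow> {CV 3, CV 4} \<notin> C)"
  "{HB, CV 4} \<in> C \<longleftrightarrow> ({CV 3, CV 4} \<in> C \<longleftrightarrow> {CV 4, CV 5} \<notin> C)"
  using cycle_at_degree_three_vertex[OF cycle, of "CV 0" "CV 1" "CV 5" "PV 0", OF g3_nbrs_CV(1)]
    cycle_at_degree_three_vertex[OF cycle, of "CV 1" "CV 0" "CV 2" "PV (2 * k)", OF g3_nbrs_CV(2)]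
    cycle_at_degree_two_vertex[OF cycle, of "CV 2" "CV 1" "CV 3", OF g3_nbrs_CV(3)]
    cycle_at_degree_three_vertex[OF cycle, of "CV 3" "CV 2" "CV 4" HB, OF g3_nbrs_CV(4)]
    cycle_at_degree_three_vertex[OF cycle, of "CV 4" "CV 3" "CV 5" HB, OF g3_nbrs_CV(5)]
    cycle_at_degree_two_vertex[OF cycle, of "CV 5" "CV 4" "CV 0", OF g3_nbrs_CV(6)]
  by (simp_all add: insert_commute)

lemma hexagon_chords_balance:
  "{CV 0, CV 1} \<in> C \<longleftrightarrow> ({CV 3, CV 4} \<in> C \<longleftrightarrow> (CV 2 \<in> set cs \<longleftrightarrow> CV 5 \<in> set cs))"
  using monochromatic_edges_parity hexagon_degree_conditions(1,3,9,11) by blast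

lemma hexagon_chord_hub_triangle: "{CV 3, CV 4} \<in> C \<Longrightarrow> CV 2 \<in> set cs \<or> CV 5 \<in> set cs"
  using no_hub_triangle hexagon_degree_conditions(2,3,10,11) by blast

lemma hexagon_vertex_on_cycle_iff:
  "CV 0 \<in> set cs \<longleftrightarrow> {CV 0, CV 1} \<in> C \<or> CV 5 \<in> set cs"
  "CV 1 \<in> set cs \<longleftrightarrow> {CV 0, CV 1} \<in> C \<or> CV 2 \<in> set cs"
  "CV 3 \<in> set cs \<longleftrightarrow> {CV 3, CV 4} \<in> C \<or> CV 2 \<in> set cs"
  "CV 4 \<in> set cs \<longleftrightarrow> {CV 3, CV 4} \<in> C \<or> CV 5 \<in> set cs"
  using hexagon_degree_conditions(1-8) by auto

lemma hexagon_remainder: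
  "CV ` {..<6} - set cs \<in> {{}, CV ` {..<6}, {CV 4, CV 5}, {CV 5, CV 0}, {CV 2, CV 3}, {CV 1, CV 2}}"
proof -
  \<comment> \<open>\<open>One_nat_def\<close> is a simp rule, so facts about \<open>CV 1\<close> only fire in the form \<open>CV (Suc 0)\<close>.\<close>
  note on_cycle = hexagon_vertex_on_cycle_iff[unfolded One_nat_def] CV_image_lessThan_6
  note balance = hexagon_chords_balance and triangle = hexagon_chord_hub_triangle
  consider (both) "CV 2 \<in> set cs" "CV 5 \<in> set cs" | (neither) "CV 2 \<notin> set cs" "CV 5 \<notin> set cs"
    | (two) "CV 2 \<in> set cs" "CV 5 \<notin> set cs" | (five) "CV 2 \<notin> set cs" "CV 5 \<in> set cs"
    by blast
  then show ?thesis
  proof cases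
    case both
    then have "CV ` {..<6} - set cs = {}" by (auto simp: on_cycle)
    then show ?thesis by simp
  next
    case neither
    then have "{CV 3, CV 4} \<notin> C" using triangle by blast
    moreover from this have "{CV 0, CV 1} \<notin> C" using balance neither by simp
    ultimately have "CV ` {..<6} - set cs = CV ` {..<6}" using neither by (auto simp: on_cycle)
    then show ?thesis by simp
  next
    case two
    then have "CV ` {..<6} - set cs = (if {CV 0, CV 1} \<in> C then {CV 4, CV 5} else {CV 5, CV 0})"
      using balance by (auto simp: on_cycle)
    then show ?thesis by simp
  next
    case five
    then have "CV ` {..<6} - set cs = (if {CV 0, CV 1} \<in> C then {CV 2, CV 3} else {CV 1, CV 2})"
      using balance by (auto simp: on_cycle)
    then show ?thesis by simp
  qed
qed

lemma vertices_subset: "set cs \<subseteq> g3_V k"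
  using cycle by (simp add: is_cycle_def)

lemma odd_path_vertex_nbrs:
  assumes "PV j \<in> set cs" "odd j"
  shows "PV (j - 1) \<in> set cs" "PV (j + 1) \<in> set cs"
proof -
  have "j \<le> 2 * k" using assms(1) vertices_subset by auto
  then have nbrs: "\<And>z. {PV j, z} \<in> g3_E k \<Longrightarrow> z = PV (j + 1) \<or> z = PV (j - 1)"
    using g3_nbrs_PV \<open>odd j\<close> by fastforce
  then have "{PV j, PV (j + 1)} \<in> C" "{PV j, PV (j - 1)} \<in> C"
    using cycle_at_degree_two_vertex[OF cycle nbrs] assms(1) by simp_all
  then show "PV (j - 1) \<in> set cs" "PV (j + 1) \<in> set cs"
    using edge_ends_on_cycle by blast+
qed

text \<open>The two cycle edges leaving the path below a gap \<open>g\<close> end in the hub, unless one of them is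
  \<open>CV 0\<close>--\<open>PV 0\<close>, which brings in \<open>CV 3\<close>--\<open>HB\<close> instead.\<close>

lemma hub_nbrs_below:
  assumes "PV a \<in> set cs" "PV b \<in> set cs" "a < g" "g < b" "PV g \<notin> set cs"
  obtains y z where "y \<noteq> z" "{HB, y} \<in> C" "{HB, z} \<in> C"
    "y \<in> insert (CV 3) (PV ` {..<g})" "z \<in> insert (CV 3) (PV ` {..<g})"
proof -
  let ?L = "PV ` {..<g}"
  have "b \<le> 2 * k" using assms(2) vertices_subset by auto
  have exit: "w = HB \<or> w = CV 0 \<and> u = PV 0" if uw: "{u, w} \<in> C" "u \<in> ?L" "w \<notin> ?L" for u w
  proof -
    obtain x where x: "u = PV x" "x < g" using uw(2) by blast
    have "w \<in> set cs" using edge_ends_on_cycle uw(1) by blast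
    then have "w \<noteq> PV (x + 1)"
      using x uw(3) assms(5) by (metis Suc_eq_plus1 Suc_lessI image_eqI lessThan_iff)
    moreover have "w \<noteq> PV (x - 1) \<or> x = 0" using x uw(3) by auto
    moreover have "x \<noteq> 2 * k" using x(2) assms(4) \<open>b \<le> 2 * k\<close> by simp
    ultimately show ?thesis
      using g3_nbrs_PV[of x w k] uw(1) edges_subset x(1) by auto
  qed
  have "PV a \<in> ?L" "PV b \<notin> ?L" using assms(3,4) by auto
  then obtain u1 w1 u2 w2 where e: "{u1, w1} \<in> C" "{u2, w2} \<in> C" "u1 \<in> ?L" "u2 \<in> ?L"
    "w1 \<notin> ?L" "w2 \<notin> ?L" "{u1, w1} \<noteq> {u2, w2}"
    by (rule cycle_crosses_twice[OF cycle assms(1) _ assms(2)])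
  have hub3: "{HB, CV 3} \<in> C" if "{CV 0, PV 0} \<in> C"
    using hexagon_ports_parity that by (simp add: insert_commute)
  consider "w1 = HB" "w2 = HB" | "w1 = HB" "w2 = CV 0" "u2 = PV 0" | "w1 = CV 0" "u1 = PV 0" "w2 = HB"
    using exit[OF e(1,3,5)] exit[OF e(2,4,6)] e(7) by blast
  then show ?thesis
  proof cases
    case 1
    then show ?thesis using that[of u1 u2] e by (auto simp: insert_commute)
  next
    case 2
    then show ?thesis using that[of u1 "CV 3"] e hub3 by (auto simp: insert_commute)
  next
    case 3
    then show ?thesis using that[of u2 "CV 3"] e hub3 by (auto simp: insert_commute)
  qed
qed

lemma hub_nbrs_above:
  assumes "PV a \<in> set cs" "PV b \<in> set cs" "a < g" "g < b" "PV g \<notin> set cs"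
  obtains y z where "y \<noteq> z" "{HB, y} \<in> C" "{HB, z} \<in> C"
    "y \<in> insert (CV 4) (PV ` {g<..})" "z \<in> insert (CV 4) (PV ` {g<..})"
proof -
  let ?R = "PV ` {g<..}"
  have exit: "w = HB \<or> w = CV 1 \<and> u = PV (2 * k)" if uw: "{u, w} \<in> C" "u \<in> ?R" "w \<notin> ?R" for u w
  proof -
    obtain x where x: "u = PV x" "g < x" using uw(2) by blast
    have "w \<in> set cs" using edge_ends_on_cycle uw(1) by blast
    then have "w \<noteq> PV (x - 1)"
      using x uw(3) assms(5) by (metis Suc_pred' greaterThan_iff image_eqI less_Suc_eq
          less_imp_Suc_add zero_less_Suc)
    moreover have "w \<noteq> PV (x + 1)" using x uw(3) by auto
    moreover have "x \<noteq> 0" using x(2) by simp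
    ultimately show ?thesis
      using g3_nbrs_PV[of x w k] uw(1) edges_subset x(1) by auto
  qed
  have "PV b \<in> ?R" "PV a \<notin> ?R" using assms(3,4) by auto
  then obtain u1 w1 u2 w2 where e: "{u1, w1} \<in> C" "{u2, w2} \<in> C" "u1 \<in> ?R" "u2 \<in> ?R"
    "w1 \<notin> ?R" "w2 \<notin> ?R" "{u1, w1} \<noteq> {u2, w2}"
    by (rule cycle_crosses_twice[OF cycle assms(2) _ assms(1)])
  have hub4: "{HB, CV 4} \<in> C" if "{CV 1, PV (2 * k)} \<in> C"
    using monochromatic_edges_parity that by (simp add: insert_commute)
  consider "w1 = HB" "w2 = HB" | "w1 = HB" "w2 = CV 1" "u2 = PV (2 * k)"
    | "w1 = CV 1" "u1 = PV (2 * k)" "w2 = HB"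
    using exit[OF e(1,3,5)] exit[OF e(2,4,6)] e(7) by blast
  then show ?thesis
  proof cases
    case 1
    then show ?thesis using that[of u1 u2] e by (auto simp: insert_commute)
  next
    case 2
    then show ?thesis using that[of u1 "CV 4"] e hub4 by (auto simp: insert_commute)
  next
    case 3
    then show ?thesis using that[of u2 "CV 4"] e hub4 by (auto simp: insert_commute)
  qed
qed

text \<open>A gap would give the hub two cycle neighbours on each side of it.\<close>

lemma path_on_cycle_convex:
  assumes "PV a \<in> set cs" "PV b \<in> set cs" "a < g" "g < b"
  shows "PV g \<in> set cs"
proof (rule ccontr)
  assume "PV g \<notin> set cs"
  obtain y1 z1 where "y1 \<noteq> z1" "{HB, y1} \<in> C" "{HB, z1} \<in> C"
    "y1 \<in> insert (CV 3) (PV ` {..<g})" "z1 \<in> insert (CV 3) (PV ` {..<g})"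
    using hub_nbrs_below[OF assms \<open>PV g \<notin> set cs\<close>] by metis
  moreover obtain y2 where "{HB, y2} \<in> C" "y2 \<in> insert (CV 4) (PV ` {g<..})"
    using hub_nbrs_above[OF assms \<open>PV g \<notin> set cs\<close>] by metis
  moreover have "insert (CV 3) (PV ` {..<g}) \<inter> insert (CV 4) (PV ` {g<..}) = {}" by auto
  ultimately show False using cycle_no_three_nbrs[OF cycle, of HB y1 z1 y2] by blast
qed

lemma path_on_cycle_interval:
  assumes "PV a \<in> set cs"
  obtains lo hi where "even lo" "even hi" "lo \<le> hi" "hi \<le> 2 * k"
    "\<And>x. PV x \<in> set cs \<longleftrightarrow> lo \<le> x \<and> x \<le> hi"
proof -
  define A where "A = {x. PV x \<in> set cs}"
  have bounded: "A \<subseteq> {..2 * k}" using vertices_subset unfolding A_def by auto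
  then have fin: "finite A" by (rule finite_subset) simp
  have "A \<noteq> {}" using assms unfolding A_def by blast
  then have lo: "PV (Min A) \<in> set cs" and hi: "PV (Max A) \<in> set cs"
    using Min_in[OF fin] Max_in[OF fin] unfolding A_def by auto
  have interval: "PV x \<in> set cs \<longleftrightarrow> Min A \<le> x \<and> x \<le> Max A" for x
  proof
    assume "PV x \<in> set cs"
    then show "Min A \<le> x \<and> x \<le> Max A" using Min_le[OF fin] Max_ge[OF fin] unfolding A_def by simp
  next
    assume "Min A \<le> x \<and> x \<le> Max A"
    then consider "x = Min A" | "x = Max A" | "Min A < x" "x < Max A" by linarith
    then show "PV x \<in> set cs" using lo hi path_on_cycle_convex[OF lo hi] by cases simp_all
  qed
  have "even (Min A)"
  proof (rule ccontr)
    assume "odd (Min A)"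
    then have "PV (Min A - 1) \<in> set cs" "0 < Min A" using odd_path_vertex_nbrs(1)[OF lo] odd_pos by auto
    then show False using interval[of "Min A - 1"] by linarith
  qed
  moreover have "even (Max A)"
  proof (rule ccontr)
    assume "odd (Max A)"
    then have "PV (Max A + 1) \<in> set cs" using odd_path_vertex_nbrs(2)[OF hi] by blast
    then show False using interval[of "Max A + 1"] by simp
  qed
  moreover have "Min A \<le> Max A" using interval lo by blast
  moreover have "Max A \<le> 2 * k" using bounded Max_in[OF fin \<open>A \<noteq> {}\<close>] by auto
  ultimately show ?thesis using interval by (rule that)
qed

lemma hub_on_cycle:
  assumes "PV a \<in> set cs"
  shows "HB \<in> set cs"
proof -
  obtain lo hi where lo: "PV lo \<in> set cs" and below: "0 < lo \<Longrightarrow> PV (lo - 1) \<notin> set cs"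
    using path_on_cycle_interval[OF assms] by (metis diff_less le_refl not_le zero_less_one)
  obtain y z where "y \<noteq> z" "{PV lo, y} \<in> C" "{PV lo, z} \<in> C"
    using cycle_degree_two[OF cycle lo] by metis
  then obtain w where w: "{PV lo, w} \<in> C" "w \<noteq> PV (lo + 1)" by metis
  then have "w \<in> set cs" using edge_ends_on_cycle by blast
  then consider "w = HB" | "w = CV 0" "lo = 0" | "w = CV 1" "lo = 2 * k"
    using g3_nbrs_PV[of lo w k] w edges_subset below by auto
  then show ?thesis
  proof cases
    case 1
    then show ?thesis using \<open>w \<in> set cs\<close> by simp
  next
    case 2
    then have "{CV 3, HB} \<in> C" using hexagon_ports_parity w(1) by (simp add: insert_commute)
    then show ?thesis using edge_ends_on_cycle by blast
  next
    case 3
    then have "{HB, CV 4} \<in> C" using monochromatic_edges_parity w(1) by (simp add: insert_commute)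
    then show ?thesis using edge_ends_on_cycle by blast
  qed
qed

lemma hub_off_cycle:
  assumes "\<And>x. PV x \<notin> set cs"
  shows "HB \<notin> set cs"
proof
  assume "HB \<in> set cs"
  obtain y z where "y \<noteq> z" "{HB, y} \<in> C" "{HB, z} \<in> C"
    using cycle_degree_two[OF cycle \<open>HB \<in> set cs\<close>] by metis
  moreover have "u = CV 3 \<or> u = CV 4" if "{HB, u} \<in> C" for u
    using g3_nbrs_HB[of u k] that edges_subset edge_ends_on_cycle assms by blast
  ultimately have "{CV 3, HB} \<in> C" by (metis insert_commute)
  then have "PV 0 \<in> set cs" using hexagon_ports_parity edge_ends_on_cycle by blast
  then show False using assms by blast
qed

lemma perfect_matching_off_cycle:
  "has_perfect_matching (g3_V k - set cs) (del_verts_E (g3_E k) (set cs))"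
  unfolding has_perfect_matching_def
proof (cases "\<exists>a. PV a \<in> set cs")
  case True
  then obtain lo hi where "even lo" "even hi" "lo \<le> hi" "hi \<le> 2 * k"
    "\<And>x. PV x \<in> set cs \<longleftrightarrow> lo \<le> x \<and> x \<le> hi"
    using path_on_cycle_interval by metis
  moreover obtain H where "H \<subseteq> g3_E k" "pairwise disjnt H" "\<Union>H = CV ` {..<6} - set cs"
    by (rule hexagon_remainder_matchable[OF hexagon_remainder])
  moreover have "HB \<in> set cs" using True hub_on_cycle by blast
  ultimately have "perfect_matching (g3_V k - set cs) (del_verts_E (g3_E k) (set cs)) (path_pairs k lo hi \<union> H)"
    using path_pairs_subset[of lo k hi] Union_path_pairs[of lo hi k]
    by (intro perfect_matching_path_pairs_Un subset_del_verts_E) (auto elim!: g3_V_cases)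
  then show "\<exists>M. perfect_matching (g3_V k - set cs) (del_verts_E (g3_E k) (set cs)) M" ..
next
  case False
  then have "HB \<notin> set cs" using hub_off_cycle by blast
  moreover obtain H where "H \<subseteq> g3_E k" "pairwise disjnt H" "\<Union>H = CV ` {..<6} - set cs"
    by (rule hexagon_remainder_matchable[OF hexagon_remainder])
  ultimately have "perfect_matching (g3_V k - set cs) (del_verts_E (g3_E k) (set cs))
      (path_pairs k 0 0 \<union> insert {HB, PV 0} H)"
    using False path_pairs_subset[of 0 k 0] Union_path_pairs[of 0 0 k] g3_hub_edge[of 0 k]
    by (intro perfect_matching_path_pairs_Un subset_del_verts_E) (auto simp: pairwise_insert elim!: g3_V_cases)
  then show "\<exists>M. perfect_matching (g3_V k - set cs) (del_verts_E (g3_E k) (set cs)) M" ..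
qed

end

lemma cycle_extendable_g3: "cycle_extendable (g3_V k) (g3_E k)"
  unfolding cycle_extendable_def
proof (intro conjI allI impI)
  show "matching_covered (g3_V k) (g3_E k)" by (rule matching_covered_g3)
  fix cs assume "even_cycle (g3_V k) (g3_E k) cs"
  then interpret g3_cycle k cs by unfold_locales (simp_all add: even_cycle_def)
  show "has_perfect_matching (g3_V k - set cs) (del_verts_E (g3_E k) (set cs))"
    by (rule perfect_matching_off_cycle)
qed

theorem proposition5p15:
  fixes V :: "'a set" and E :: "'a set set"
  assumes "in_G3 V E"
  shows "cycle_extendable V E"
proof -
  from assms obtain k and f :: "g3v \<Rightarrow> 'a" where "bij_betw f (g3_V k) V" "E = (`) f ` g3_E k"
    unfolding in_G3_def by blast
  then show ?thesis using cycle_extendable_image cycle_extendable_g3 by blast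
qed

end
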